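(* Let $\mathcal{H}$ be a normed vector space, $c:\mathcal{H}\to[0,\infty)$ a scale function, $\mathcal{R}:\mathcal{H}\to[0,\infty)$ a regularizer, and let $\mathcal{L},\mathcal{L}_\eta:\mathcal{H}\to\mathbb{R}$ be the expected loss on original data and on perturbed data, and $\widehat{\mathcal{L}}_\eta$ the (random) empirical loss on $n$ perturbed samples. Assume: (A) (scaled uniform convergence) with probability at least $1-\delta$ over the $n$ samples, $|\widehat{\mathcal{L}}_\eta(\theta)-\mathcal{L}_\eta(\theta)|\le\varepsilon_{n,\delta}\,c(\theta)$ for all $\theta\in\mathcal{H}$; (B) (super-scale regularization) there is $r:[0,\infty)\to[0,\infty)$ with $z\le r(z)$ for all $z\ge0$ and $r(c(\theta))\le\mathcal{R}(\theta)<\infty$ for all $\theta\in\mathcal{H}$; (C) (bounded perturbed loss) $|\mathcal{L}_\eta(\theta)-\mathcal{L}(\theta)|\le\varepsilon'_n\,c(\theta)$ for all $\theta\in\mathcal{H}$. Let $\theta^*\in\arg\min_{\theta\in\mathcal{H}}\mathcal{L}(\theta)$ and $\theta^*_\eta\in\arg\min_{\theta\in\mathcal{H}}\mathcal{L}_\eta(\theta)$ exist. Let $\alpha\ge2$, $\lambda_n=\alpha\varepsilon_{n,\delta}$, $\xi\ge0$, and let $\widehat{\theta}_\eta$ be any $\xi$-approximate minimizer of the perturbed regularized empirical loss, i.e. $$\widehat{\mathcal{L}}_\eta(\widehat{\theta}_\eta)+\lambda_n\mathcal{R}(\widehat{\theta}_\eta)\le\xi+\inf_{\theta\in\mathcal{H}}\big(\widehat{\mathcal{L}}_\eta(\theta)+\lambda_n\mathcal{R}(\theta)\big).$$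 If $\varepsilon'_n\le\varepsilon_{n,\delta}$, then with probability at least $1-\delta$, $$\mathcal{L}(\widehat{\theta}_\eta)-\mathcal{L}(\theta^* )\le\varepsilon_{n,\delta}\big(\alpha\mathcal{R}(\theta^*_\eta)+c(\theta^*_\eta)\big)+\varepsilon'_n\,c(\theta^* )+\xi.$$
   Context: Setting: data $x^{(1)},\dots,x^{(n)}$ are drawn from an unknown distribution $\mathcal{D}$ and perturbed by noise $\eta^{(i)}$ drawn from a distribution $\mathcal{Q}$ via a map $\psi(x,\eta)$; $\widehat{\mathcal{L}}_\eta$ is the empirical loss on the perturbed samples $\psi(x^{(i)},\eta^{(i)})$, $\mathcal{L}_\eta=\mathbb{E}_{\mathcal{D},\mathcal{Q}}[\widehat{\mathcal{L}}_\eta]$, and $\mathcal{L}=\mathbb{E}_{\mathcal{D}}[\widehat{\mathcal{L}}]$ with $\widehat{\mathcal{L}}$ the empirical loss on the original samples. The rate $\varepsilon_{n,\delta}$ is nonincreasing in $n$ and $\delta$ and tends to $0$ as $n\to\infty$ for each $\delta\in(0,1)$. *)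

theory Defs
  imports "HOL-Probability.Probability"
begin

end

theory Submission
  imports Defs
begin

text \<open>On the event of scaled uniform convergence everything is deterministic. Comparing the
  approximate minimizer \<open>\<theta>hat\<close> with \<open>\<theta>s\<^sub>\<eta>\<close> in the regularized empirical objective, the two
  deviation terms \<open>\<epsilon> c(\<theta>hat)\<close> and \<open>\<epsilon>' c(\<theta>hat) \<le> \<epsilon> c(\<theta>hat)\<close> at \<open>\<theta>hat\<close> are absorbed by the
  penalty \<open>\<alpha> \<epsilon> R(\<theta>hat) \<ge> 2 \<epsilon> c(\<theta>hat)\<close>; what remains is paid at \<open>\<theta>s\<^sub>\<eta>\<close> and, through
  \<open>L\<^sub>\<eta>(\<theta>s\<^sub>\<eta>) \<le> L\<^sub>\<eta>(\<theta>s)\<close>, at \<open>\<theta>s\<close>.\<close>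

lemma approx_argmin_le:
  assumes "ereal (f x) \<le> ereal \<xi> + (INF y\<in>S. ereal (f y))" and "y \<in> S"
  shows "f x \<le> \<xi> + f y"
proof -
  have "ereal (f x) \<le> ereal \<xi> + ereal (f y)"
    using assms by (meson INF_lower add_left_mono order_trans)
  then show ?thesis by simp
qed

lemma regularized_excess_risk_bound:
  fixes L L\<^sub>\<eta> Lhat c R :: "'h \<Rightarrow> real"
  assumes uniform: "\<And>\<theta>. \<bar>Lhat \<theta> - L\<^sub>\<eta> \<theta>\<bar> \<le> \<epsilon> * c \<theta>"
    and perturb: "\<And>\<theta>. \<bar>L\<^sub>\<eta> \<theta> - L \<theta>\<bar> \<le> \<epsilon>' * c \<theta>"
    and approx: "Lhat t + \<alpha> * \<epsilon> * R t \<le> \<xi> + (Lhat \<theta>e + \<alpha> * \<epsilon> * R \<theta>e)"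
    and min: "L\<^sub>\<eta> \<theta>e \<le> L\<^sub>\<eta> \<theta>s"
    and "c t \<le> R t" "0 \<le> c t" "0 \<le> \<epsilon>" "\<epsilon>' \<le> \<epsilon>" "2 \<le> \<alpha>"
  shows "L t - L \<theta>s \<le> \<epsilon> * (\<alpha> * R \<theta>e + c \<theta>e) + \<epsilon>' * c \<theta>s + \<xi>"
proof -
  have "2 * \<epsilon> * c t \<le> \<alpha> * \<epsilon> * c t"
    using assms(6-9) by (simp add: mult_right_mono)
  also have "\<dots> \<le> \<alpha> * \<epsilon> * R t"
    using assms(5-9) by (simp add: mult_left_mono)
  finally have penalty: "2 * \<epsilon> * c t \<le> \<alpha> * \<epsilon> * R t" .
  have "\<epsilon>' * c t \<le> \<epsilon> * c t"
    using assms(6,8) by (simp add: mult_right_mono)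
  with uniform[of t] uniform[of \<theta>e] perturb[of t] perturb[of \<theta>s] approx min penalty
  show ?thesis by (simp add: abs_le_iff algebra_simps)
qed

theorem theorem2:
  fixes M :: "'w measure"
    and c R :: "'h::real_normed_vector \<Rightarrow> real"
    and r :: "real \<Rightarrow> real"
    and L L\<^sub>\<eta> :: "'h \<Rightarrow> real"
    and Lhat\<^sub>\<eta> :: "'w \<Rightarrow> 'h \<Rightarrow> real"
    and \<theta>hat :: "'w \<Rightarrow> 'h"
    and \<theta>s \<theta>s\<^sub>\<eta> :: 'h
    and \<epsilon> \<epsilon>' \<delta> \<alpha> \<xi> lam :: real
  assumes "prob_space M"
    and "0 < \<delta>" "\<delta> < 1" and "0 \<le> \<epsilon>"
    and c_nonneg: "\<And>\<theta>. 0 \<le> c \<theta>"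
    and R_nonneg: "\<And>\<theta>. 0 \<le> R \<theta>"
    and A: "\<exists>A\<in>sets M. measure M A \<ge> 1 - \<delta> \<and>
              (\<forall>\<omega>\<in>A. \<forall>\<theta>. \<bar>Lhat\<^sub>\<eta> \<omega> \<theta> - L\<^sub>\<eta> \<theta>\<bar> \<le> \<epsilon> * c \<theta>)"
    and B1: "\<And>z. 0 \<le> z \<Longrightarrow> 0 \<le> r z \<and> z \<le> r z"
    and B2: "\<And>\<theta>. r (c \<theta>) \<le> R \<theta>"
    and C: "\<And>\<theta>. \<bar>L\<^sub>\<eta> \<theta> - L \<theta>\<bar> \<le> \<epsilon>' * c \<theta>"
    and min1: "is_arg_min L (\<lambda>_. True) \<theta>s"
    and min2: "is_arg_min L\<^sub>\<eta> (\<lambda>_. True) \<theta>s\<^sub>\<eta>"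
    and "\<alpha> \<ge> 2" and "lam = \<alpha> * \<epsilon>" and "\<xi> \<ge> 0"
    and approx: "\<And>\<omega>. \<omega> \<in> space M \<Longrightarrow>
       ereal (Lhat\<^sub>\<eta> \<omega> (\<theta>hat \<omega>) + lam * R (\<theta>hat \<omega>))
         \<le> ereal \<xi> + (INF \<theta>. ereal (Lhat\<^sub>\<eta> \<omega> \<theta> + lam * R \<theta>))"
    and "\<epsilon>' \<le> \<epsilon>"
  shows "\<exists>B\<in>sets M. measure M B \<ge> 1 - \<delta> \<and>
           (\<forall>\<omega>\<in>B. L (\<theta>hat \<omega>) - L \<theta>s
              \<le> \<epsilon> * (\<alpha> * R \<theta>s\<^sub>\<eta> + c \<theta>s\<^sub>\<eta>) + \<epsilon>' * c \<theta>s + \<xi>)"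
proof -
  from A obtain A where "A \<in> sets M" "measure M A \<ge> 1 - \<delta>"
    and uniform: "\<forall>\<omega>\<in>A. \<forall>\<theta>. \<bar>Lhat\<^sub>\<eta> \<omega> \<theta> - L\<^sub>\<eta> \<theta>\<bar> \<le> \<epsilon> * c \<theta>" by blast
  have "L (\<theta>hat \<omega>) - L \<theta>s \<le> \<epsilon> * (\<alpha> * R \<theta>s\<^sub>\<eta> + c \<theta>s\<^sub>\<eta>) + \<epsilon>' * c \<theta>s + \<xi>"
    if "\<omega> \<in> A" for \<omega>
  proof (rule regularized_excess_risk_bound)
    have "\<omega> \<in> space M" using that \<open>A \<in> sets M\<close> sets.sets_into_space by blast
    then show "Lhat\<^sub>\<eta> \<omega> (\<theta>hat \<omega>) + \<alpha> * \<epsilon> * R (\<theta>hat \<omega>)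
        \<le> \<xi> + (Lhat\<^sub>\<eta> \<omega> \<theta>s\<^sub>\<eta> + \<alpha> * \<epsilon> * R \<theta>s\<^sub>\<eta>)"
      using approx_argmin_le[OF approx] \<open>lam = \<alpha> * \<epsilon>\<close> by simp
    show "L\<^sub>\<eta> \<theta>s\<^sub>\<eta> \<le> L\<^sub>\<eta> \<theta>s" using min2 by (simp add: is_arg_min_linorder)
    show "c (\<theta>hat \<omega>) \<le> R (\<theta>hat \<omega>)"
      using B1[OF c_nonneg] B2 by (meson order_trans)
  qed (use that uniform C c_nonneg \<open>0 \<le> \<epsilon>\<close> \<open>\<epsilon>' \<le> \<epsilon>\<close> \<open>\<alpha> \<ge> 2\<close> in simp_all)
  with \<open>A \<in> sets M\<close> \<open>measure M A \<ge> 1 - \<delta>\<close> show ?thesis by blast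
qed

end
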